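(* Let $f_{SN_1}(x)=\sqrt{\frac{x^2+1}{2}}-\left(\frac{\sqrt x+1}{2}\right)^2$ for $x\in(0,\infty)$, let $f_{SN_1}^*(u)=u\,f_{SN_1}\!\left(\frac{1-u}{u}\right)$ for $u\in(0,1)$, extended by continuity to $[0,1]$ (explicitly $f_{SN_1}^*(u)=\frac{\sqrt2}{2}\sqrt{u^2+(1-u)^2}-\frac14\left(1+2\sqrt{u(1-u)}\right)$), and define $\overline M_{SN_1}(C_1,C_2)=E_X\{f_{SN_1}^*(P(C_2\mid x))\}$. Then $$P_e\le \frac12\left[1-\frac{4}{2\sqrt2-1}\,\overline M_{SN_1}(C_1,C_2)\right].$$
   Context: Two-class decision problem: classes $C_1,C_2$, an observation $x$ in a space $\mathrm X$ with density $p(x)$, and a posteriori probabilities $P(C_1\mid x),P(C_2\mid x)\ge0$ with $P(C_1\mid x)+P(C_2\mid x)=1$. $E_X\{g(x)\}=\int_{\mathrm X} g(x)p(x)\,dx$. $P_e=E_X\{\min(P(C_1\mid x),P(C_2\mid x))\}$ is the Bayesian probability of error. *)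

theory Defs
  imports "HOL-Analysis.Analysis"
begin

definition fSN1 :: "real \<Rightarrow> real" where
  "fSN1 x = sqrt ((x^2 + 1) / 2) - ((sqrt x + 1) / 2)^2"

text \<open>u f((1-u)/u) on (0,1), extended by continuity to the endpoints
  (both limits equal sqrt 2 / 2 - 1/4).\<close>
definition fSN1_star :: "real \<Rightarrow> real" where
  "fSN1_star u = (if 0 < u \<and> u < 1 then u * fSN1 ((1 - u) / u)
                  else sqrt 2 / 2 - 1 / 4)"

end

theory Submission
  imports Defs
begin

text \<open>With \<open>u = P(C\<^sub>2 | x)\<close> write \<open>m = min u (1 - u)\<close>, so that \<open>P\<^sub>e = E\<^sub>X{m}\<close>.
  In closed form \<open>fSN1_star u\<close> is \<open>sqrt ((m\<^sup>2 + (1 - m)\<^sup>2) / 2)\<close> minus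
  \<open>(1 + 2 sqrt (m (1 - m))) / 4\<close>. The first term is convex in \<open>m\<close>, hence below its chord on
  \<open>[0, 1/2]\<close>, and \<open>sqrt (m (1 - m)) \<ge> m\<close>; together this gives the pointwise bound
  \<open>fSN1_star u \<le> (2 sqrt 2 - 1) / 4 * (1 - 2 m)\<close>, which integrates against \<open>p\<close> to the theorem.\<close>

lemma fSN1_star_eq:
  assumes "0 \<le> u" "u \<le> 1"
  shows "fSN1_star u = sqrt ((u\<^sup>2 + (1 - u)\<^sup>2) / 2) - (1 + 2 * sqrt (u * (1 - u))) / 4"
proof (cases "0 < u \<and> u < 1")
  case True
  then have u: "0 < u" "u < 1" by auto
  have "u * sqrt ((((1 - u) / u)\<^sup>2 + 1) / 2) = sqrt (u\<^sup>2 * ((((1 - u) / u)\<^sup>2 + 1) / 2))"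
    using u by (subst real_sqrt_mult) simp
  also have "\<dots> = sqrt ((u\<^sup>2 + (1 - u)\<^sup>2) / 2)"
    using u by (simp add: field_simps power2_eq_square)
  finally have first: "u * sqrt ((((1 - u) / u)\<^sup>2 + 1) / 2) = sqrt ((u\<^sup>2 + (1 - u)\<^sup>2) / 2)" .
  have "u * ((sqrt ((1 - u) / u) + 1) / 2)\<^sup>2 = (sqrt u * sqrt ((1 - u) / u) + sqrt u)\<^sup>2 / 4"
    using u by (simp add: power2_eq_square field_simps)
  also have "\<dots> = (sqrt (1 - u) + sqrt u)\<^sup>2 / 4"
    using u by (simp add: real_sqrt_divide)
  also have "\<dots> = (1 + 2 * sqrt (u * (1 - u))) / 4"
    unfolding real_sqrt_mult[of u "1 - u"] using u by (simp add: power2_eq_square algebra_simps)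
  finally have second: "u * ((sqrt ((1 - u) / u) + 1) / 2)\<^sup>2 = (1 + 2 * sqrt (u * (1 - u))) / 4" .
  show ?thesis
    using u first second unfolding fSN1_star_def fSN1_def by (simp add: right_diff_distrib)
next
  case False
  with assms have "u = 0 \<or> u = 1" by auto
  moreover have "sqrt (1 / 2) = sqrt 2 / 2"
    by (simp add: real_sqrt_divide field_simps)
  ultimately show ?thesis unfolding fSN1_star_def by auto
qed

lemma sqrt_half_sum_squares_le_chord:
  assumes "0 \<le> m" "m \<le> 1 / 2"
  shows "sqrt ((m\<^sup>2 + (1 - m)\<^sup>2) / 2) \<le> sqrt 2 / 2 - (sqrt 2 - 1) * m"
proof (rule real_le_lsqrt)
  have s: "sqrt 2 * sqrt 2 = 2" by simp
  have "1 < sqrt 2" by simp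
  then have "(sqrt 2 - 1) * m \<le> (sqrt 2 - 1) * (1 / 2)"
    using assms by (intro mult_left_mono) auto
  then show "0 \<le> sqrt 2 / 2 - (sqrt 2 - 1) * m" by (simp add: left_diff_distrib)
  have "(sqrt 2 / 2 - (sqrt 2 - 1) * m)\<^sup>2 - (m\<^sup>2 + (1 - m)\<^sup>2) / 2
        = (sqrt 2 - 1) * (m * (1 - 2 * m))"
    by (simp add: power2_eq_square field_simps s)
  moreover have "0 \<le> (sqrt 2 - 1) * (m * (1 - 2 * m))"
    using assms \<open>1 < sqrt 2\<close> by simp
  ultimately show "(m\<^sup>2 + (1 - m)\<^sup>2) / 2 \<le> (sqrt 2 / 2 - (sqrt 2 - 1) * m)\<^sup>2"
    by linarith
qed

lemma min_le_sqrt_mult_one_minus: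
  fixes u :: real
  assumes "0 \<le> u" "u \<le> 1"
  shows "min u (1 - u) \<le> sqrt (u * (1 - u))"
proof (rule real_le_rsqrt)
  have "min u (1 - u) * min u (1 - u) \<le> u * (1 - u)"
    using assms by (intro mult_mono) auto
  then show "(min u (1 - u))\<^sup>2 \<le> u * (1 - u)" by (simp add: power2_eq_square)
qed

lemma two_sqrt_two_minus_one_pos: "0 < 2 * sqrt 2 - (1 :: real)"
  using real_sqrt_gt_1_iff[of 2] by linarith

lemma fSN1_star_le:
  assumes "0 \<le> u" "u \<le> 1"
  shows "fSN1_star u \<le> (2 * sqrt 2 - 1) / 4 * (1 - 2 * min u (1 - u))"
proof -
  define m where "m = min u (1 - u)"
  have m: "0 \<le> m" "m \<le> 1 / 2" using assms unfolding m_def by (auto simp: min_def)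
  have "u\<^sup>2 + (1 - u)\<^sup>2 = m\<^sup>2 + (1 - m)\<^sup>2" unfolding m_def by (cases "u \<le> 1 - u") auto
  then have "fSN1_star u = sqrt ((m\<^sup>2 + (1 - m)\<^sup>2) / 2) - (1 + 2 * sqrt (u * (1 - u))) / 4"
    using fSN1_star_eq[OF assms] by simp
  also have "\<dots> \<le> (sqrt 2 / 2 - (sqrt 2 - 1) * m) - (1 + 2 * m) / 4"
    using sqrt_half_sum_squares_le_chord[OF m] min_le_sqrt_mult_one_minus[OF assms, folded m_def]
    by (simp add: field_simps)
  also have "\<dots> = (2 * sqrt 2 - 1) / 4 * (1 - 2 * m)" by (simp add: algebra_simps)
  finally show ?thesis unfolding m_def .
qed

lemma fSN1_star_nonneg:
  assumes "0 \<le> u" "u \<le> 1"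
  shows "0 \<le> fSN1_star u"
proof -
  have "1 / 2 \<le> sqrt ((u\<^sup>2 + (1 - u)\<^sup>2) / 2)"
  proof (rule real_le_rsqrt)
    have "0 \<le> (2 * u - 1)\<^sup>2" by simp
    then show "(1 / 2)\<^sup>2 \<le> (u\<^sup>2 + (1 - u)\<^sup>2) / 2" by (simp add: power2_eq_square algebra_simps)
  qed
  moreover have "sqrt (u * (1 - u)) \<le> sqrt ((1 / 2)\<^sup>2)"
  proof (rule real_sqrt_le_mono)
    have "0 \<le> (2 * u - 1)\<^sup>2" by simp
    then show "u * (1 - u) \<le> (1 / 2)\<^sup>2" by (simp add: power2_eq_square algebra_simps)
  qed
  ultimately show ?thesis using fSN1_star_eq[OF assms] by simp
qed

lemma abs_fSN1_star_le_1:
  assumes "0 \<le> u" "u \<le> 1"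
  shows "\<bar>fSN1_star u\<bar> \<le> 1"
proof -
  have "fSN1_star u \<le> (2 * sqrt 2 - 1) / 4 * (1 - 2 * min u (1 - u))"
    by (rule fSN1_star_le[OF assms])
  also have "\<dots> \<le> (2 * sqrt 2 - 1) / 4"
  proof (rule mult_left_le)
    show "1 - 2 * min u (1 - u) \<le> 1" using assms by simp
    show "0 \<le> (2 * sqrt 2 - 1) / 4" using two_sqrt_two_minus_one_pos by simp
  qed
  also have "\<dots> \<le> 1"
    using real_sqrt_less_mono[of 2 4] by simp
  finally show ?thesis using fSN1_star_nonneg[OF assms] by simp
qed

lemma min_le_fSN1_star_bound:
  assumes "0 \<le> u" "u \<le> 1"
  shows "min u (1 - u) \<le> 1 / 2 * (1 - 4 / (2 * sqrt 2 - 1) * fSN1_star u)"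
proof -
  have "4 / (2 * sqrt 2 - 1) * fSN1_star u \<le> 1 - 2 * min u (1 - u)"
    using fSN1_star_le[OF assms] two_sqrt_two_minus_one_pos by (simp add: field_simps)
  then show ?thesis by simp
qed

lemma borel_measurable_fSN1_star [measurable]: "fSN1_star \<in> borel_measurable borel"
  unfolding fSN1_star_def fSN1_def by measurable

lemma integrable_bounded_mult:
  fixes g p :: "'a \<Rightarrow> real"
  assumes "integrable N p" "g \<in> borel_measurable N" "\<And>x. x \<in> space N \<Longrightarrow> \<bar>g x\<bar> \<le> 1"
  shows "integrable N (\<lambda>x. g x * p x)"
proof (rule Bochner_Integration.integrable_bound[OF assms(1)])
  show "(\<lambda>x. g x * p x) \<in> borel_measurable N"
    using assms(1,2) by measurable
  show "AE x in N. norm (g x * p x) \<le> norm (p x)"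
    using assms(3) by (auto simp: abs_mult intro!: mult_left_le_one_le)
qed

theorem mainTheorem4:
  fixes N :: "'a measure" and p P1 P2 :: "'a \<Rightarrow> real"
  assumes p_meas: "p \<in> borel_measurable N"
    and p_nonneg: "\<And>x. x \<in> space N \<Longrightarrow> p x \<ge> 0"
    and p_int: "integrable N p"
    and p_one: "(\<integral>x. p x \<partial>N) = 1"
    and P1_meas: "P1 \<in> borel_measurable N"
    and P2_meas: "P2 \<in> borel_measurable N"
    and P1_nonneg: "\<And>x. x \<in> space N \<Longrightarrow> P1 x \<ge> 0"
    and P2_nonneg: "\<And>x. x \<in> space N \<Longrightarrow> P2 x \<ge> 0"
    and P_sum: "\<And>x. x \<in> space N \<Longrightarrow> P1 x + P2 x = 1"
  shows "(\<integral>x. min (P1 x) (P2 x) * p x \<partial>N)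
         \<le> 1 / 2 * (1 - 4 / (2 * sqrt 2 - 1) * (\<integral>x. fSN1_star (P2 x) * p x \<partial>N))"
proof -
  define c where "c = 4 / (2 * sqrt 2 - 1)"
  have P2_unit: "0 \<le> P2 x" "P2 x \<le> 1" "P1 x = 1 - P2 x" if "x \<in> space N" for x
    using P1_nonneg[OF that] P2_nonneg[OF that] P_sum[OF that] by linarith+
  have int_min: "integrable N (\<lambda>x. min (P1 x) (P2 x) * p x)"
    using P1_meas P2_meas P2_unit by (intro integrable_bounded_mult p_int) auto
  have int_star: "integrable N (\<lambda>x. fSN1_star (P2 x) * p x)"
    using P2_meas P2_unit abs_fSN1_star_le_1
    by (intro integrable_bounded_mult p_int) auto
  have "(\<integral>x. min (P1 x) (P2 x) * p x \<partial>N)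
        \<le> (\<integral>x. 1 / 2 * p x - c / 2 * (fSN1_star (P2 x) * p x) \<partial>N)"
  proof (intro integral_mono int_min)
    show "integrable N (\<lambda>x. 1 / 2 * p x - c / 2 * (fSN1_star (P2 x) * p x))"
      using p_int int_star by simp
    fix x assume x: "x \<in> space N"
    have "min (P1 x) (P2 x) * p x \<le> 1 / 2 * (1 - c * fSN1_star (P2 x)) * p x"
      using min_le_fSN1_star_bound[of "P2 x"] P2_unit[OF x] p_nonneg[OF x]
      unfolding c_def by (intro mult_right_mono) (auto simp: min.commute)
    then show "min (P1 x) (P2 x) * p x \<le> 1 / 2 * p x - c / 2 * (fSN1_star (P2 x) * p x)"
      by (simp add: algebra_simps)
  qed
  also have "\<dots> = 1 / 2 * (1 - c * (\<integral>x. fSN1_star (P2 x) * p x \<partial>N))"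
    using p_int int_star p_one by (simp add: algebra_simps)
  finally show ?thesis unfolding c_def .
qed

end
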